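(* For every finite simple graph $G$ with complement $\overline{G}$, \[ \xi_f(\overline{G}) = \operatorname{mr}_f^+(G). \]
   Context: All graphs are finite and simple; $\overline{G}$ has the same vertex set as $G$, and distinct $u,v$ are adjacent in $\overline{G}$ iff they are not adjacent in $G$. For $d,r\in\mathbb{N}$ with $r\le d$, a $d/r$-representation of a graph $H$ is an assignment of matrices $P_u\in\mathbb{C}^{d\times d}$, $u\in V(H)$, with $\operatorname{rank}P_u=r$, $P_u^*=P_u$, $P_u^2=P_u$, such that $P_uP_v=0$ whenever $uv\in E(H)$. The projective rank is $\xi_f(H)=\inf\{d/r : H \text{ has a } d/r\text{-representation}\}$. A $(d;r)$ faithful orthogonal subspace representation of $G$ is a family $\{S_u\}_{u\in V(G)}$ of $r$-dimensional subspaces of $\mathbb{C}^d$ such that for distinct $u,v$, $S_u\perp S_v$ if and only if $uv\notin E(G)$. The $r$-fold minimum positive semidefinite rank $\operatorname{mr}^+_{[r]}(G)$ is the minimum $d$ such that $G$ has a $(d;r)$ faithful orthogonal subspace representation, and the fractional minimum positive semidefinite rank is $\operatorname{mr}^+_f(G)=\inf_{r\in\mathbb{N}} \operatorname{mr}^+_{[r]}(G)/r$. *)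

theory Defs
  imports "Jordan_Normal_Form.DL_Rank" "Jordan_Normal_Form.Schur_Decomposition"
    "Jordan_Normal_Form.Conjugate"
begin

(* Graphs: vertex type 'v (finite, hence nonempty), adjacency E :: 'v => 'v => bool. *)
definition simple_graph :: "('v \<Rightarrow> 'v \<Rightarrow> bool) \<Rightarrow> bool" where
  "simple_graph E \<longleftrightarrow> (\<forall>u v. E u v \<longrightarrow> E v u) \<and> (\<forall>u. \<not> E u u)"

definition complement_graph :: "('v \<Rightarrow> 'v \<Rightarrow> bool) \<Rightarrow> 'v \<Rightarrow> 'v \<Rightarrow> bool" where
  "complement_graph E u v \<longleftrightarrow> u \<noteq> v \<and> \<not> E u v"

definition dr_representation ::
  "('v \<Rightarrow> 'v \<Rightarrow> bool) \<Rightarrow> nat \<Rightarrow> nat \<Rightarrow> ('v \<Rightarrow> complex mat) \<Rightarrow> bool" where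
  "dr_representation H d r P \<longleftrightarrow>
     (\<forall>u. P u \<in> carrier_mat d d \<and> vec_space.rank d (P u) = r
          \<and> mat_adjoint (P u) = P u \<and> P u * P u = P u) \<and>
     (\<forall>u v. H u v \<longrightarrow> P u * P v = 0\<^sub>m d d)"

definition projective_rank :: "('v \<Rightarrow> 'v \<Rightarrow> bool) \<Rightarrow> real" where
  "projective_rank H = Inf {real d / real r | d r. 0 < r \<and> r \<le> d \<and>
      (\<exists>P. dr_representation H d r P)}"

definition dim_subspace :: "nat \<Rightarrow> nat \<Rightarrow> complex vec set \<Rightarrow> bool" where
  "dim_subspace d r S \<longleftrightarrow> VectorSpace.subspace class_ring S (module_vec TYPE(complex) d) \<and>
     vectorspace.dim class_ring ((module_vec TYPE(complex) d)\<lparr>carrier := S\<rparr>) = r"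

definition subspaces_orth :: "complex vec set \<Rightarrow> complex vec set \<Rightarrow> bool" where
  "subspaces_orth S T \<longleftrightarrow> (\<forall>x\<in>S. \<forall>y\<in>T. x \<bullet>c y = 0)"

definition faithful_osr ::
  "('v \<Rightarrow> 'v \<Rightarrow> bool) \<Rightarrow> nat \<Rightarrow> nat \<Rightarrow> ('v \<Rightarrow> complex vec set) \<Rightarrow> bool" where
  "faithful_osr G d r S \<longleftrightarrow> (\<forall>u. dim_subspace d r (S u)) \<and>
     (\<forall>u v. u \<noteq> v \<longrightarrow> (subspaces_orth (S u) (S v) \<longleftrightarrow> \<not> G u v))"

definition mr_plus_fold :: "('v \<Rightarrow> 'v \<Rightarrow> bool) \<Rightarrow> nat \<Rightarrow> nat" where
  "mr_plus_fold G r = (LEAST d. \<exists>S. faithful_osr G d r S)"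

definition mr_plus_frac :: "('v \<Rightarrow> 'v \<Rightarrow> bool) \<Rightarrow> real" where
  "mr_plus_frac G = Inf {real (mr_plus_fold G r) / real r | r. 0 < r}"

end

theory Submission
  imports Defs
begin

text \<open>An \<open>r\<close>-dimensional subspace of \<open>\<complex>\<^sup>d\<close> is the column space of a \<open>d \<times> r\<close>
isometry \<open>W\<close> (\<open>W\<^sup>* W = 1\<close>), the rank-\<open>r\<close> orthogonal projections are exactly the matrices
\<open>W W\<^sup>*\<close>, and two such column spaces are orthogonal iff \<open>W\<^sub>u\<^sup>* W\<^sub>v = 0\<close>.  Hence a faithful
\<open>(d;r)\<close> representation of \<open>G\<close> yields a \<open>d/r\<close>-representation of the complement, which
gives one inequality.  Conversely, a \<open>d/r\<close>-representation of the complement is a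
representation of \<open>G\<close> by isometries that is orthogonal on non-edges but possibly not
faithful.  The block-diagonal sum of \<open>k\<close> copies of it and one faithful \<open>(m;1)\<close>
representation is a faithful \<open>(kd+m; kr+1)\<close> representation, and
\<open>(kd+m)/(kr+1) \<rightarrow> d/r\<close> as \<open>k \<rightarrow> \<infinity>\<close>.\<close>

section \<open>The conjugate transpose\<close>

lemma mat_adjoint_dim [simp]:
  "dim_row (mat_adjoint A) = dim_col A" "dim_col (mat_adjoint A) = dim_row A"
  unfolding mat_adjoint_def by auto

lemma index_mat_adjoint [simp]:
  "i < dim_col A \<Longrightarrow> j < dim_row A \<Longrightarrow> mat_adjoint A $$ (i, j) = conjugate (A $$ (j, i))"
  unfolding mat_adjoint_def by (auto simp: mat_of_rows_def)

lemma mat_adjoint_carrier [simp, intro]: "A \<in> carrier_mat m n \<Longrightarrow> mat_adjoint A \<in> carrier_mat n m"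
  by auto

lemma mat_adjoint_adjoint [simp]: "mat_adjoint (mat_adjoint (A :: complex mat)) = A"
  by (rule eq_matI) auto

lemma mat_adjoint_mult:
  fixes A B :: "complex mat"
  assumes "A \<in> carrier_mat m n" "B \<in> carrier_mat n p"
  shows "mat_adjoint (A * B) = mat_adjoint B * mat_adjoint A"
  using assms by (intro eq_matI) (auto simp: scalar_prod_def mult.commute)

lemma index_mat_adjoint_mult:
  fixes A B :: "complex mat"
  assumes "A \<in> carrier_mat d n" "B \<in> carrier_mat d m" "i < n" "j < m"
  shows "(mat_adjoint B * A) $$ (j, i) = col A i \<bullet>c col B j"
  using assms by (auto simp: scalar_prod_def mult.commute intro!: sum.cong)

lemma cscalar_prod_mult_mat_vec:
  fixes x b :: "complex vec"
  assumes "x \<in> carrier_vec d" "B \<in> carrier_mat d r" "b \<in> carrier_vec r"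
  shows "x \<bullet>c (B *\<^sub>v b) = (mat_adjoint B *\<^sub>v x) \<bullet>c b"
proof -
  have "x \<bullet>c (B *\<^sub>v b) = (\<Sum>k<d. x $ k * (\<Sum>j<r. cnj (B $$ (k, j)) * cnj (b $ j)))"
    using assms by (auto simp: scalar_prod_def lessThan_atLeast0 intro!: sum.cong)
  also have "\<dots> = (\<Sum>k<d. \<Sum>j<r. x $ k * cnj (B $$ (k, j)) * cnj (b $ j))"
    by (simp add: sum_distrib_left mult.assoc)
  also have "\<dots> = (\<Sum>j<r. \<Sum>k<d. x $ k * cnj (B $$ (k, j)) * cnj (b $ j))"
    by (rule sum.swap)
  also have "\<dots> = (\<Sum>j<r. (\<Sum>k<d. cnj (B $$ (k, j)) * x $ k) * cnj (b $ j))"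
    by (simp add: sum_distrib_right sum_distrib_left ac_simps)
  also have "\<dots> = (mat_adjoint B *\<^sub>v x) \<bullet>c b"
    using assms by (auto simp: scalar_prod_def lessThan_atLeast0 intro!: sum.cong)
  finally show ?thesis .
qed

section \<open>Isometries and normalized vectors\<close>

definition isometry_mat :: "complex mat \<Rightarrow> nat \<Rightarrow> nat \<Rightarrow> bool" where
  "isometry_mat W d r \<longleftrightarrow> W \<in> carrier_mat d r \<and> mat_adjoint W * W = 1\<^sub>m r"

lemma isometry_matD:
  assumes "isometry_mat W d r"
  shows "W \<in> carrier_mat d r" "mat_adjoint W \<in> carrier_mat r d" "mat_adjoint W * W = 1\<^sub>m r"
  using assms unfolding isometry_mat_def by auto

lemma isometry_projections_mult_zero:
  assumes "isometry_mat W d r" "isometry_mat V d r'" "mat_adjoint W * V = 0\<^sub>m r r'"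
  shows "(W * mat_adjoint W) * (V * mat_adjoint V) = 0\<^sub>m d d"
proof -
  note W = isometry_matD[OF assms(1)] and V = isometry_matD[OF assms(2)]
  have "(W * mat_adjoint W) * (V * mat_adjoint V) = W * (mat_adjoint W * (V * mat_adjoint V))"
    using W V by (intro assoc_mult_mat) auto
  also have "mat_adjoint W * (V * mat_adjoint V) = (mat_adjoint W * V) * mat_adjoint V"
    using W V by (intro assoc_mult_mat[symmetric]) auto
  also have "\<dots> = 0\<^sub>m r d" using assms(3) V by simp
  finally show ?thesis using W by simp
qed

definition normalize_vec :: "complex vec \<Rightarrow> complex vec" where
  "normalize_vec u = complex_of_real (1 / sqrt (Re (u \<bullet>c u))) \<cdot>\<^sub>v u"

lemma normalize_vec_carrier [simp]: "u \<in> carrier_vec n \<Longrightarrow> normalize_vec u \<in> carrier_vec n"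
  unfolding normalize_vec_def by simp

lemma cscalar_prod_self_pos:
  fixes u :: "complex vec"
  assumes "u \<in> carrier_vec n" "u \<noteq> 0\<^sub>v n"
  shows "Re (u \<bullet>c u) > 0" "u \<bullet>c u = of_real (Re (u \<bullet>c u))"
  using conjugate_square_greater_0_vec[OF assms(1)] assms(2)
  by (auto simp: less_complex_def complex_eq_iff)

lemma cscalar_prod_normalize_vec:
  fixes u v :: "complex vec"
  assumes "u \<in> carrier_vec n" "v \<in> carrier_vec n"
  shows "normalize_vec u \<bullet>c normalize_vec v =
    complex_of_real (1 / sqrt (Re (u \<bullet>c u))) * complex_of_real (1 / sqrt (Re (v \<bullet>c v))) * (u \<bullet>c v)"
  using assms unfolding normalize_vec_def by (simp add: conjugate_smult_vec)

lemma cscalar_prod_normalize_vec_self: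
  fixes u :: "complex vec"
  assumes "u \<in> carrier_vec n" "u \<noteq> 0\<^sub>v n"
  shows "normalize_vec u \<bullet>c normalize_vec u = 1"
proof -
  let ?z = "u \<bullet>c u"
  have z: "Re ?z > 0" "?z = of_real (Re ?z)" using cscalar_prod_self_pos[OF assms] by auto
  have "normalize_vec u \<bullet>c normalize_vec u = complex_of_real (1 / sqrt (Re ?z) * (1 / sqrt (Re ?z)) * Re ?z)"
    unfolding cscalar_prod_normalize_vec[OF assms(1) assms(1)] of_real_mult by (subst z(2)) simp
  also have "1 / sqrt (Re ?z) * (1 / sqrt (Re ?z)) * Re ?z = 1"
    using z(1) by (simp add: field_simps)
  finally show ?thesis by simp
qed

lemma cscalar_prod_normalize_vec_eq_0_iff:
  fixes u v :: "complex vec"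
  assumes "u \<in> carrier_vec n" "u \<noteq> 0\<^sub>v n" "v \<in> carrier_vec n" "v \<noteq> 0\<^sub>v n"
  shows "normalize_vec u \<bullet>c normalize_vec v = 0 \<longleftrightarrow> u \<bullet>c v = 0"
  using cscalar_prod_self_pos(1)[OF assms(1,2)] cscalar_prod_self_pos(1)[OF assms(3,4)]
  by (simp add: cscalar_prod_normalize_vec[OF assms(1,3)])

section \<open>Column spaces, isometries and orthogonal projections\<close>

context
  fixes d :: nat
begin

interpretation vec_space "TYPE(complex)" d .
interpretation cof_vec_space d "TYPE(complex)" .

lemma col_in_col_space:
  fixes A :: "complex mat"
  assumes "A \<in> carrier_mat d n" "i < n"
  shows "col A i \<in> col_space A"
proof -
  have "set (cols A) \<subseteq> carrier_vec d" using assms cols_dim by blast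
  moreover have "col A i \<in> set (cols A)" using assms by (auto simp: cols_def)
  ultimately show ?thesis unfolding col_space_def by (rule span_mem)
qed

lemma col_space_eq_range:
  fixes A :: "complex mat"
  assumes "A \<in> carrier_mat d n"
  shows "col_space A = {A *\<^sub>v x | x. x \<in> carrier_vec n}"
  using col_space_eq[OF assms] assms by auto

lemma subspaces_orth_col_space_iff:
  fixes A B :: "complex mat"
  assumes A: "A \<in> carrier_mat d n" and B: "B \<in> carrier_mat d m"
  shows "subspaces_orth (col_space A) (col_space B)
     \<longleftrightarrow> mat_adjoint B * A = 0\<^sub>m m n"
proof
  assume orth: "subspaces_orth (col_space A) (col_space B)"
  show "mat_adjoint B * A = 0\<^sub>m m n"
  proof (rule eq_matI)
    fix j i assume "j < dim_row (0\<^sub>m m n :: complex mat)" "i < dim_col (0\<^sub>m m n :: complex mat)"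
    then show "(mat_adjoint B * A) $$ (j, i) = 0\<^sub>m m n $$ (j, i)"
      using index_mat_adjoint_mult[OF A B] orth col_in_col_space[OF A, of i]
        col_in_col_space[OF B, of j] unfolding subspaces_orth_def by auto
  qed (use A B in auto)
next
  assume zero: "mat_adjoint B * A = 0\<^sub>m m n"
  show "subspaces_orth (col_space A) (col_space B)"
    unfolding subspaces_orth_def col_space_eq_range[OF A] col_space_eq_range[OF B]
  proof (intro ballI, elim CollectE exE conjE)
    fix x y a b
    assume x: "x = A *\<^sub>v a" and a: "a \<in> carrier_vec n" and y: "y = B *\<^sub>v b" and b: "b \<in> carrier_vec m"
    have "x \<bullet>c y = (mat_adjoint B *\<^sub>v (A *\<^sub>v a)) \<bullet>c b"
      using cscalar_prod_mult_mat_vec[OF mult_mat_vec_carrier[OF A a] B b] x y by simp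
    also have "\<dots> = ((mat_adjoint B * A) *\<^sub>v a) \<bullet>c b"
      using assoc_mult_mat_vec[of "mat_adjoint B" m d A n a] A B a by simp
    also have "\<dots> = 0" using zero a b by (simp add: scalar_prod_def)
    finally show "x \<bullet>c y = 0" .
  qed
qed

lemma dim_subspace_col_space:
  fixes W :: "complex mat"
  assumes "W \<in> carrier_mat d n" "rank W = r"
  shows "dim_subspace d r (col_space W)"
proof -
  have "set (cols W) \<subseteq> carrier_vec d" using assms cols_dim by blast
  then have "VectorSpace.subspace class_ring (span (set (cols W))) V"
    using span_is_subspace by auto
  then show ?thesis using assms unfolding dim_subspace_def col_space_def rank_def by auto
qed

lemma dim_subspace_basis_list:
  assumes "dim_subspace d r S"
  obtains ws where "set ws \<subseteq> carrier_vec d" "distinct ws" "length ws = r"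
    "lin_indpt (set ws)" "span (set ws) = S"
proof -
  have sub: "VectorSpace.subspace class_ring S V" and dimS: "vectorspace.dim class_ring (vs S) = r"
    using assms unfolding dim_subspace_def by auto
  have SV: "S \<subseteq> carrier_vec d" using sub unfolding VectorSpace.subspace_def submodule_def by auto
  have subm: "submodule class_ring S V" using sub unfolding VectorSpace.subspace_def by auto
  have vsS: "vectorspace class_ring (vs S)" using subspace_is_vs[OF sub] .
  let ?P = "\<lambda>T. T \<subseteq> S \<and> lin_indpt T"
  have "finite T \<and> card T \<le> d" if "?P T" for T
    using li_le_dim[of T] that SV dim_is_n by auto
  moreover have "?P {}" unfolding lin_dep_def by auto
  ultimately obtain B where finB: "finite B" and maxB: "maximal B ?P"
    using maximal_exists[of ?P d "{}"] by blast
  have BS: "B \<subseteq> S" and liB: "lin_indpt B" using maxB unfolding maximal_def by auto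
  have "module.lin_dep class_ring (vs S) T = lin_dep T" if "T \<subseteq> S" for T
    using span_li_not_depend(2)[OF that subm] .
  then have "maximal B (\<lambda>T. T \<subseteq> carrier (vs S) \<and> \<not> module.lin_dep class_ring (vs S) T)"
    using maxB unfolding maximal_def by auto
  then have basB: "vectorspace.basis class_ring (vs S) B"
    using vectorspace.max_li_is_basis[OF vsS] by blast
  have cardB: "card B = r" using vectorspace.dim_basis[OF vsS finB basB] dimS by simp
  have spanB: "span B = S"
    using basB span_li_not_depend(1)[OF BS subm] vectorspace.basis_def[OF vsS] by auto
  obtain ws where ws: "set ws = B" "distinct ws" using finite_distinct_list[OF finB] by blast
  have "length ws = r" using distinct_card[OF ws(2)] ws(1) cardB by simp
  then show ?thesis
    by (intro that[of ws]) (use ws BS SV liB spanB in auto)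
qed

lemma rank_isometry_mat:
  assumes "isometry_mat W d r"
  shows "rank W = r"
proof -
  note W = isometry_matD[OF assms]
  have cols_orthonormal: "col W i \<bullet>c col W j = (if i = j then 1 else 0)" if "i < r" "j < r" for i j
    using index_mat_adjoint_mult[OF W(1) W(1) that] W(3) that by auto
  have dist: "distinct (cols W)"
  proof (rule ccontr)
    assume "\<not> distinct (cols W)"
    then obtain i j where "i < r" "j < r" "i \<noteq> j" "col W i = col W j"
      using W by (auto simp: distinct_conv_nth)
    then show False using cols_orthonormal[of i j] cols_orthonormal[of j j] by auto
  qed
  have "lin_indpt (set (cols W))"
  proof
    assume "lin_dep (set (cols W))"
    then obtain v where v: "v \<in> carrier_vec r" "v \<noteq> 0\<^sub>v r" "W *\<^sub>v v = 0\<^sub>v d"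
      using lin_depE[OF W(1) _ dist] by blast
    have "v = (mat_adjoint W * W) *\<^sub>v v" using W v by simp
    also have "\<dots> = mat_adjoint W *\<^sub>v (W *\<^sub>v v)" using W v by (intro assoc_mult_mat_vec) auto
    also have "\<dots> = 0\<^sub>v r" using v W by (intro eq_vecI) (auto simp: scalar_prod_def)
    finally show False using v by simp
  qed
  then show ?thesis using lin_indpt_full_rank[OF W(1) dist] by blast
qed

lemma isometry_mat_projection:
  assumes iso: "isometry_mat W d r"
  shows "W * mat_adjoint W \<in> carrier_mat d d"
    "mat_adjoint (W * mat_adjoint W) = W * mat_adjoint W"
    "(W * mat_adjoint W) * (W * mat_adjoint W) = W * mat_adjoint W"
    "rank (W * mat_adjoint W) = r"
proof -
  note W = isometry_matD[OF iso]
  show P: "W * mat_adjoint W \<in> carrier_mat d d" using W by auto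
  show "mat_adjoint (W * mat_adjoint W) = W * mat_adjoint W" using mat_adjoint_mult[OF W(1,2)] by simp
  have "(W * mat_adjoint W) * W = W * (mat_adjoint W * W)"
    using W by (intro assoc_mult_mat) auto
  also have "\<dots> = W" using W by simp
  finally have PW: "(W * mat_adjoint W) * W = W" .
  show "(W * mat_adjoint W) * (W * mat_adjoint W) = W * mat_adjoint W"
    using assoc_mult_mat[OF P W(1,2)] PW by simp
  have "{W * mat_adjoint W *\<^sub>v x | x. x \<in> carrier_vec d} = {W *\<^sub>v x | x. x \<in> carrier_vec r}"
  proof (intro equalityI subsetI; elim CollectE exE conjE)
    fix y x assume "y = W * mat_adjoint W *\<^sub>v x" "x \<in> carrier_vec d"
    then show "y \<in> {W *\<^sub>v x | x. x \<in> carrier_vec r}"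
      using assoc_mult_mat_vec[OF W(1,2), of x]
      by (auto intro!: exI[of _ "mat_adjoint W *\<^sub>v x"] mult_mat_vec_carrier[OF W(2)])
  next
    fix y x assume y: "y = W *\<^sub>v x" "x \<in> carrier_vec r"
    have "W * mat_adjoint W *\<^sub>v (W *\<^sub>v x) = W *\<^sub>v x"
      using assoc_mult_mat_vec[OF P W(1) y(2)] PW by simp
    moreover have "W *\<^sub>v x \<in> carrier_vec d" using W y by auto
    ultimately show "y \<in> {W * mat_adjoint W *\<^sub>v x | x. x \<in> carrier_vec d}"
      unfolding y(1) by (intro CollectI exI[of _ "W *\<^sub>v x"]) auto
  qed
  then have "col_space (W * mat_adjoint W) = col_space W"
    using col_space_eq_range[OF P] col_space_eq_range[OF W(1)] by simp
  then show "rank (W * mat_adjoint W) = r"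
    using rank_isometry_mat[OF iso] unfolding rank_def col_space_def by metis
qed

lemma span_map_normalize_vec:
  assumes us: "set us \<subseteq> carrier_vec d" and nz: "0\<^sub>v d \<notin> set us"
  shows "span (set (map normalize_vec us)) = span (set us)"
proof
  have ns: "set (map normalize_vec us) \<subseteq> carrier_vec d" using us by auto
  show "span (set (map normalize_vec us)) \<subseteq> span (set us)"
  proof (rule span_subsetI[OF us], rule subsetI)
    fix v assume "v \<in> set (map normalize_vec us)"
    then obtain u where u: "u \<in> set us" "v = normalize_vec u" by auto
    show "v \<in> span (set us)"
      unfolding u(2) normalize_vec_def by (rule smult_in_span[OF us span_mem[OF us u(1)]])
  qed
  show "span (set us) \<subseteq> span (set (map normalize_vec us))"
  proof (rule span_subsetI[OF ns], rule subsetI)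
    fix u assume u: "u \<in> set us"
    then have uC: "u \<in> carrier_vec d" "u \<noteq> 0\<^sub>v d" using us nz by auto
    let ?c = "complex_of_real (1 / sqrt (Re (u \<bullet>c u)))"
    have "?c \<noteq> 0" using cscalar_prod_self_pos[OF uC] by simp
    then have u_eq: "u = inverse ?c \<cdot>\<^sub>v normalize_vec u"
      unfolding normalize_vec_def using uC by (simp add: smult_smult_assoc)
    have "normalize_vec u \<in> span (set (map normalize_vec us))"
      using u by (intro span_mem[OF ns]) auto
    then have "inverse ?c \<cdot>\<^sub>v normalize_vec u \<in> span (set (map normalize_vec us))"
      by (rule smult_in_span[OF ns])
    then show "u \<in> span (set (map normalize_vec us))" using u_eq by simp
  qed
qed

lemma isometry_mat_normalized_cols:
  assumes us: "set us \<subseteq> carrier_vec d" and orth: "corthogonal us"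
  defines "W \<equiv> mat_of_cols d (map normalize_vec us)"
  shows "isometry_mat W d (length us)"
    and "col_space W = span (set us)"
proof -
  have usi: "us ! i \<in> carrier_vec d" "us ! i \<noteq> 0\<^sub>v d" if "i < length us" for i
    using that us corthogonalD[OF orth that that] by auto
  have ns: "set (map normalize_vec us) \<subseteq> carrier_vec d" using us by auto
  have W: "W \<in> carrier_mat d (length us)" unfolding W_def by auto
  have colW: "col W i = normalize_vec (us ! i)" if "i < length us" for i
    unfolding W_def using that ns by (subst col_mat_of_cols) auto
  show "isometry_mat W d (length us)" unfolding isometry_mat_def
  proof (intro conjI W eq_matI)
    fix i j assume "i < dim_row (1\<^sub>m (length us) :: complex mat)" "j < dim_col (1\<^sub>m (length us) :: complex mat)"
    then have ij: "i < length us" "j < length us" by auto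
    have "(mat_adjoint W * W) $$ (i, j) = normalize_vec (us ! j) \<bullet>c normalize_vec (us ! i)"
      using index_mat_adjoint_mult[OF W W ij(2,1)] colW ij by simp
    also have "\<dots> = (if i = j then 1 else 0)"
      using cscalar_prod_normalize_vec_self[OF usi[OF ij(1)]]
        cscalar_prod_normalize_vec_eq_0_iff[OF usi[OF ij(2)] usi[OF ij(1)]] corthogonalD[OF orth ij(2,1)]
      by auto
    finally show "(mat_adjoint W * W) $$ (i, j) = 1\<^sub>m (length us) $$ (i, j)" using ij by simp
  qed (use W in auto)
  have "span (set (map normalize_vec us)) = span (set us)"
    using span_map_normalize_vec[OF us] usi by (metis in_set_conv_nth)
  then show "col_space W = span (set us)" unfolding col_space_def W_def using ns by simp
qed

lemma dim_subspace_isometry: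
  assumes "dim_subspace d r S"
  obtains W where "isometry_mat W d r" "col_space W = S"
proof -
  obtain ws where ws: "set ws \<subseteq> carrier_vec d" "distinct ws" "length ws = r"
    "lin_indpt (set ws)" "span (set ws) = S"
    using dim_subspace_basis_list[OF assms] by blast
  define us where "us = gram_schmidt d ws"
  note gs = gram_schmidt_result[OF ws(1,2,4) us_def]
  show ?thesis
  proof (rule that)
    show "isometry_mat (mat_of_cols d (map normalize_vec us)) d r"
      using isometry_mat_normalized_cols(1)[OF gs(3,2)] gs(4) ws(3) by simp
    show "col_space (mat_of_cols d (map normalize_vec us)) = S"
      using isometry_mat_normalized_cols(2)[OF gs(3,2)] gs(1) ws(5) by simp
  qed
qed

lemma projection_eq_isometry_product:
  fixes P :: "complex mat"
  assumes P: "P \<in> carrier_mat d d" and herm: "mat_adjoint P = P" and idem: "P * P = P"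
    and rk: "rank P = r"
  obtains W where "isometry_mat W d r" "W * mat_adjoint W = P"
proof -
  obtain W where iso: "isometry_mat W d r" and cs: "col_space W = col_space P"
    using dim_subspace_isometry[OF dim_subspace_col_space[OF P rk]] by blast
  note W = isometry_matD[OF iso]
  have Q: "W * mat_adjoint W \<in> carrier_mat d d" using W by auto
  have PW: "P * W = W"
  proof (rule mat_col_eqI)
    fix j assume "j < dim_col W"
    then have j: "j < r" using W by auto
    obtain x where x: "x \<in> carrier_vec d" "col W j = P *\<^sub>v x"
      using col_in_col_space[OF W(1) j] cs col_space_eq_range[OF P] by auto
    have "col (P * W) j = (P * P) *\<^sub>v x" using col_mult2[OF P W(1) j] x assoc_mult_mat_vec[OF P P x(1)] by simp
    then show "col (P * W) j = col W j" using idem x by simp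
  qed (use P W in auto)
  have QP: "(W * mat_adjoint W) * P = P"
  proof (rule mat_col_eqI)
    fix j assume "j < dim_col P"
    then have j: "j < d" using P by auto
    obtain x where x: "x \<in> carrier_vec r" "col P j = W *\<^sub>v x"
      using col_in_col_space[OF P j] cs col_space_eq_range[OF W(1)] by auto
    have "mat_adjoint W *\<^sub>v (W *\<^sub>v x) = x"
      using assoc_mult_mat_vec[OF W(2,1) x(1)] W x by simp
    then show "col ((W * mat_adjoint W) * P) j = col P j"
      using col_mult2[OF Q P j] assoc_mult_mat_vec[OF W(1,2), of "W *\<^sub>v x"] W x by simp
  qed (use P W in auto)
  have "P = mat_adjoint ((W * mat_adjoint W) * P)" using QP herm by simp
  also have "\<dots> = P * (W * mat_adjoint W)"
    using mat_adjoint_mult[OF Q P] mat_adjoint_mult[OF W(1,2)] herm by simp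
  also have "\<dots> = W * mat_adjoint W" using assoc_mult_mat[OF P W(1,2)] PW by simp
  finally show ?thesis using that[OF iso] by simp
qed

end

section \<open>Block-diagonal sums\<close>

definition block_diag :: "complex mat \<Rightarrow> complex mat \<Rightarrow> complex mat" where
  "block_diag A B = four_block_mat A (0\<^sub>m (dim_row A) (dim_col B)) (0\<^sub>m (dim_row B) (dim_col A)) B"

lemma block_diag_carrier [simp, intro]:
  "A \<in> carrier_mat a1 a2 \<Longrightarrow> B \<in> carrier_mat b1 b2 \<Longrightarrow> block_diag A B \<in> carrier_mat (a1 + b1) (a2 + b2)"
  unfolding block_diag_def by auto

lemma mat_adjoint_block_diag: "mat_adjoint (block_diag A B) = block_diag (mat_adjoint A) (mat_adjoint B)"
  unfolding block_diag_def by (rule eq_matI) auto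

lemma block_diag_mult:
  assumes "A \<in> carrier_mat a1 a2" "B \<in> carrier_mat b1 b2" "C \<in> carrier_mat a2 c" "D \<in> carrier_mat b2 e"
  shows "block_diag A B * block_diag C D = block_diag (A * C) (B * D)"
proof -
  have AB: "block_diag A B = four_block_mat A (0\<^sub>m a1 b2) (0\<^sub>m b1 a2) B"
    and CD: "block_diag C D = four_block_mat C (0\<^sub>m a2 e) (0\<^sub>m b2 c) D"
    using assms unfolding block_diag_def by auto
  have "block_diag A B * block_diag C D = four_block_mat (A * C + 0\<^sub>m a1 b2 * 0\<^sub>m b2 c)
      (A * 0\<^sub>m a2 e + 0\<^sub>m a1 b2 * D) (0\<^sub>m b1 a2 * C + B * 0\<^sub>m b2 c) (0\<^sub>m b1 a2 * 0\<^sub>m a2 e + B * D)"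
    unfolding AB CD by (rule mult_four_block_mat) (use assms in auto)
  also have "\<dots> = four_block_mat (A * C) (0\<^sub>m a1 e) (0\<^sub>m b1 c) (B * D)"
    using assms by (intro cong_four_block_mat) simp_all
  also have "\<dots> = block_diag (A * C) (B * D)"
    unfolding block_diag_def using assms by simp
  finally show ?thesis .
qed

lemma block_diag_eq_0_iff:
  assumes "A \<in> carrier_mat a1 a2" "B \<in> carrier_mat b1 b2"
  shows "block_diag A B = 0\<^sub>m (a1 + b1) (a2 + b2) \<longleftrightarrow> A = 0\<^sub>m a1 a2 \<and> B = 0\<^sub>m b1 b2"
proof
  assume zero: "block_diag A B = 0\<^sub>m (a1 + b1) (a2 + b2)"
  have "A $$ (i, j) = 0" if "i < a1" "j < a2" for i j
    using arg_cong[OF zero, of "\<lambda>M. M $$ (i, j)"] assms that unfolding block_diag_def by auto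
  moreover have "B $$ (i, j) = 0" if "i < b1" "j < b2" for i j
    using arg_cong[OF zero, of "\<lambda>M. M $$ (i + a1, j + a2)"] assms that unfolding block_diag_def by auto
  ultimately show "A = 0\<^sub>m a1 a2 \<and> B = 0\<^sub>m b1 b2" using assms by auto
qed (use assms in \<open>auto simp: block_diag_def\<close>)

lemma isometry_mat_block_diag:
  assumes "isometry_mat A d r" "isometry_mat B d' r'"
  shows "isometry_mat (block_diag A B) (d + d') (r + r')"
proof -
  note A = isometry_matD[OF assms(1)] and B = isometry_matD[OF assms(2)]
  have "mat_adjoint (block_diag A B) * block_diag A B = block_diag (mat_adjoint A * A) (mat_adjoint B * B)"
    unfolding mat_adjoint_block_diag using A B by (intro block_diag_mult) auto
  also have "\<dots> = 1\<^sub>m (r + r')" using A B unfolding block_diag_def by simp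
  finally show ?thesis unfolding isometry_mat_def using A B by auto
qed

lemma adjoint_block_diag_mult_eq_0_iff:
  assumes "isometry_mat A d r" "isometry_mat B d' r'" "isometry_mat A' d r" "isometry_mat B' d' r'"
  shows "mat_adjoint (block_diag A B) * block_diag A' B' = 0\<^sub>m (r + r') (r + r') \<longleftrightarrow>
     mat_adjoint A * A' = 0\<^sub>m r r \<and> mat_adjoint B * B' = 0\<^sub>m r' r'"
proof -
  note A = isometry_matD[OF assms(1)] isometry_matD[OF assms(3)]
  note B = isometry_matD[OF assms(2)] isometry_matD[OF assms(4)]
  have "mat_adjoint (block_diag A B) * block_diag A' B' = block_diag (mat_adjoint A * A') (mat_adjoint B * B')"
    unfolding mat_adjoint_block_diag using A B by (intro block_diag_mult) auto
  moreover have "mat_adjoint A * A' \<in> carrier_mat r r" "mat_adjoint B * B' \<in> carrier_mat r' r'"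
    using A B by auto
  ultimately show ?thesis using block_diag_eq_0_iff by metis
qed

section \<open>Representations of a graph by isometries\<close>

lemma simple_graph_sym: "simple_graph G \<Longrightarrow> G u v \<longleftrightarrow> G v u"
  unfolding simple_graph_def by blast

definition isometry_rep :: "('v \<Rightarrow> 'v \<Rightarrow> bool) \<Rightarrow> ('v \<Rightarrow> complex mat) \<Rightarrow> nat \<Rightarrow> nat \<Rightarrow> bool" where
  "isometry_rep G W d r \<longleftrightarrow> (\<forall>u. isometry_mat (W u) d r) \<and>
     (\<forall>u v. u \<noteq> v \<longrightarrow> \<not> G u v \<longrightarrow> mat_adjoint (W u) * W v = 0\<^sub>m r r)"

definition faithful_isometry_rep :: "('v \<Rightarrow> 'v \<Rightarrow> bool) \<Rightarrow> ('v \<Rightarrow> complex mat) \<Rightarrow> nat \<Rightarrow> nat \<Rightarrow> bool" where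
  "faithful_isometry_rep G W d r \<longleftrightarrow> (\<forall>u. isometry_mat (W u) d r) \<and>
     (\<forall>u v. u \<noteq> v \<longrightarrow> (mat_adjoint (W u) * W v = 0\<^sub>m r r \<longleftrightarrow> \<not> G u v))"

lemma faithful_isometry_rep_imp_isometry_rep:
  "faithful_isometry_rep G W d r \<Longrightarrow> isometry_rep G W d r"
  unfolding faithful_isometry_rep_def isometry_rep_def by auto

lemma isometry_rep_block_diag:
  fixes W W' :: "'v \<Rightarrow> complex mat"
  assumes "isometry_rep G W d r" "isometry_rep G W' d' r'"
  shows "isometry_rep G (\<lambda>u. block_diag (W u) (W' u)) (d + d') (r + r')"
  unfolding isometry_rep_def
proof (intro conjI allI impI)
  fix u :: 'v
  show "isometry_mat (block_diag (W u) (W' u)) (d + d') (r + r')"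
    using assms unfolding isometry_rep_def by (intro isometry_mat_block_diag) auto
next
  fix u v :: 'v assume "u \<noteq> v" "\<not> G u v"
  then show "mat_adjoint (block_diag (W u) (W' u)) * block_diag (W v) (W' v) = 0\<^sub>m (r + r') (r + r')"
    using assms unfolding isometry_rep_def by (subst adjoint_block_diag_mult_eq_0_iff) auto
qed

lemma faithful_isometry_rep_block_diag:
  fixes W W' :: "'v \<Rightarrow> complex mat"
  assumes "isometry_rep G W d r" "faithful_isometry_rep G W' d' r'"
  shows "faithful_isometry_rep G (\<lambda>u. block_diag (W u) (W' u)) (d + d') (r + r')"
  unfolding faithful_isometry_rep_def
proof (intro conjI allI impI)
  fix u :: 'v
  show "isometry_mat (block_diag (W u) (W' u)) (d + d') (r + r')"
    using assms unfolding isometry_rep_def faithful_isometry_rep_def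
    by (intro isometry_mat_block_diag) auto
next
  fix u v :: 'v assume "u \<noteq> v"
  then show "mat_adjoint (block_diag (W u) (W' u)) * block_diag (W v) (W' v) = 0\<^sub>m (r + r') (r + r')
      \<longleftrightarrow> \<not> G u v"
    using assms unfolding isometry_rep_def faithful_isometry_rep_def
    by (subst adjoint_block_diag_mult_eq_0_iff) auto
qed

lemma isometry_rep_multiple:
  assumes "isometry_rep G W d r"
  shows "\<exists>W'. isometry_rep G W' (k * d) (k * r)"
proof (induction k)
  case 0
  have "isometry_rep G (\<lambda>u. 0\<^sub>m 0 0) 0 0"
    unfolding isometry_rep_def isometry_mat_def by auto
  then show ?case by auto
next
  case (Suc k)
  then obtain W' where "isometry_rep G W' (k * d) (k * r)" by blast
  from isometry_rep_block_diag[OF assms this] show ?case by (auto simp: add.commute)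
qed

lemma faithful_isometry_rep_faithful_osr:
  fixes G :: "'v \<Rightarrow> 'v \<Rightarrow> bool"
  assumes G: "simple_graph G" and rep: "faithful_isometry_rep G W d r"
  shows "faithful_osr G d r (\<lambda>u. vec_space.col_space d (W u))"
  unfolding faithful_osr_def
proof (intro conjI allI impI)
  fix u :: 'v
  have iso: "isometry_mat (W u) d r" using rep unfolding faithful_isometry_rep_def by auto
  show "dim_subspace d r (vec_space.col_space d (W u))"
    using dim_subspace_col_space[OF isometry_matD(1)[OF iso] rank_isometry_mat[OF iso]] .
next
  fix u v :: 'v assume uv: "u \<noteq> v"
  have "W u \<in> carrier_mat d r" "W v \<in> carrier_mat d r"
    using rep unfolding faithful_isometry_rep_def isometry_mat_def by auto
  then have "subspaces_orth (vec_space.col_space d (W u)) (vec_space.col_space d (W v))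
      \<longleftrightarrow> mat_adjoint (W v) * W u = 0\<^sub>m r r"
    by (rule subspaces_orth_col_space_iff)
  also have "\<dots> \<longleftrightarrow> \<not> G v u"
    using rep uv unfolding faithful_isometry_rep_def by auto
  also have "\<dots> \<longleftrightarrow> \<not> G u v" using simple_graph_sym[OF G] by blast
  finally show "subspaces_orth (vec_space.col_space d (W u)) (vec_space.col_space d (W v)) \<longleftrightarrow> \<not> G u v" .
qed

lemma faithful_osr_faithful_isometry_rep:
  fixes G :: "'v \<Rightarrow> 'v \<Rightarrow> bool"
  assumes G: "simple_graph G" and osr: "faithful_osr G d r S"
  obtains W where "faithful_isometry_rep G W d r"
proof -
  have "\<exists>W. isometry_mat W d r \<and> vec_space.col_space d W = S u" for u
  proof -
    have "dim_subspace d r (S u)" using osr unfolding faithful_osr_def by blast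
    from dim_subspace_isometry[OF this] show ?thesis by blast
  qed
  then obtain W where W: "\<And>u. isometry_mat (W u) d r" "\<And>u. vec_space.col_space d (W u) = S u"
    by metis
  have "faithful_isometry_rep G W d r" unfolding faithful_isometry_rep_def
  proof (intro conjI allI impI W)
    fix u v :: 'v assume uv: "u \<noteq> v"
    have "mat_adjoint (W u) * W v = 0\<^sub>m r r \<longleftrightarrow> subspaces_orth (S v) (S u)"
      using subspaces_orth_col_space_iff[OF isometry_matD(1)[OF W(1)[of v]] isometry_matD(1)[OF W(1)[of u]]]
      unfolding W(2) by simp
    also have "\<dots> \<longleftrightarrow> \<not> G v u" using osr uv unfolding faithful_osr_def by auto
    also have "\<dots> \<longleftrightarrow> \<not> G u v" using simple_graph_sym[OF G] by blast
    finally show "mat_adjoint (W u) * W v = 0\<^sub>m r r \<longleftrightarrow> \<not> G u v" .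
  qed
  then show ?thesis using that by blast
qed

lemma faithful_isometry_rep_dr_representation:
  fixes G :: "'v \<Rightarrow> 'v \<Rightarrow> bool"
  assumes rep: "faithful_isometry_rep G W d r"
  shows "dr_representation (complement_graph G) d r (\<lambda>u. W u * mat_adjoint (W u))"
  unfolding dr_representation_def
proof (intro conjI allI impI)
  fix u :: 'v
  have "isometry_mat (W u) d r" using rep unfolding faithful_isometry_rep_def by auto
  note P = isometry_mat_projection[OF this]
  show "W u * mat_adjoint (W u) \<in> carrier_mat d d" "vec_space.rank d (W u * mat_adjoint (W u)) = r"
    "mat_adjoint (W u * mat_adjoint (W u)) = W u * mat_adjoint (W u)"
    "W u * mat_adjoint (W u) * (W u * mat_adjoint (W u)) = W u * mat_adjoint (W u)" using P by auto
next
  fix u v :: 'v assume "complement_graph G u v"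
  then show "W u * mat_adjoint (W u) * (W v * mat_adjoint (W v)) = 0\<^sub>m d d"
    using rep isometry_projections_mult_zero
    unfolding faithful_isometry_rep_def complement_graph_def by blast
qed

lemma dr_representation_isometry_rep:
  fixes G :: "'v \<Rightarrow> 'v \<Rightarrow> bool"
  assumes dr: "dr_representation (complement_graph G) d r P"
  obtains W where "isometry_rep G W d r"
proof -
  have "\<forall>u. \<exists>W. isometry_mat W d r \<and> W * mat_adjoint W = P u"
    using dr projection_eq_isometry_product unfolding dr_representation_def by metis
  then obtain W where iso: "\<And>u. isometry_mat (W u) d r" and WP: "\<And>u. W u * mat_adjoint (W u) = P u"
    by metis
  have "isometry_rep G W d r" unfolding isometry_rep_def
  proof (intro conjI allI impI iso)
    fix u v :: 'v assume "u \<noteq> v" "\<not> G u v"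
    then have PP: "P u * P v = 0\<^sub>m d d"
      using dr unfolding dr_representation_def complement_graph_def by auto
    note Wu = isometry_matD[OF iso[of u]] and Wv = isometry_matD[OF iso[of v]]
    have Pu: "P u \<in> carrier_mat d d" and Pv: "P v \<in> carrier_mat d d"
      using dr unfolding dr_representation_def by auto
    have WuP: "mat_adjoint (W u) * P u = mat_adjoint (W u)"
      unfolding WP[symmetric] using assoc_mult_mat[OF Wu(2,1,2)] Wu by simp
    have "P v * W v = W v * (mat_adjoint (W v) * W v)"
      unfolding WP[symmetric] using Wv by (intro assoc_mult_mat) auto
    then have PWv: "P v * W v = W v" using Wv by simp
    have "mat_adjoint (W u) * W v = (mat_adjoint (W u) * P u) * (P v * W v)"
      using WuP PWv by simp
    also have "\<dots> = mat_adjoint (W u) * (P u * (P v * W v))"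
      using Wu Pu Pv Wv by (intro assoc_mult_mat) auto
    also have "P u * (P v * W v) = (P u * P v) * W v"
      using assoc_mult_mat[OF Pu Pv Wv(1)] by simp
    also have "\<dots> = 0\<^sub>m d r" using PP Wv by simp
    also have "mat_adjoint (W u) * 0\<^sub>m d r = 0\<^sub>m r r" using Wu by simp
    finally show "mat_adjoint (W u) * W v = 0\<^sub>m r r" .
  qed
  then show ?thesis using that by blast
qed

section \<open>Existence of faithful representations\<close>

text \<open>Index the coordinates by ordered pairs of vertices; \<open>x u\<close> is the indicator of the
pairs \<open>(a, b)\<close> containing \<open>u\<close> with \<open>a = b\<close> or \<open>a\<close> adjacent to \<open>b\<close>.  For \<open>u \<noteq> v\<close> the
only possible common pairs are \<open>(u, v)\<close> and \<open>(v, u)\<close>, present exactly when \<open>G u v\<close>.\<close>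

lemma faithful_vector_rep_exists:
  fixes G :: "'v::finite \<Rightarrow> 'v \<Rightarrow> bool"
  assumes G: "simple_graph G"
  shows "\<exists>m (x :: 'v \<Rightarrow> complex vec). (\<forall>u. x u \<in> carrier_vec m \<and> x u \<noteq> 0\<^sub>v m) \<and>
                (\<forall>u v. u \<noteq> v \<longrightarrow> (x u \<bullet>c x v = 0 \<longleftrightarrow> \<not> G u v))"
proof -
  define N where "N = card (UNIV :: ('v \<times> 'v) set)"
  obtain f :: "'v \<times> 'v \<Rightarrow> nat" where f: "bij_betw f UNIV {0..<N}"
    using ex_bij_betw_finite_nat[of "UNIV :: ('v \<times> 'v) set"] unfolding N_def by auto
  define h where "h = inv_into UNIV f"
  have hf: "h (f p) = p" for p unfolding h_def using f by (simp add: bij_betw_def)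
  have fN: "f p < N" for p using f by (auto simp: bij_betw_def)
  define C where "C u = (\<lambda>(a, b). (a = u \<or> b = u) \<and> (a = b \<or> G a b))" for u
  define x where "x u = vec N (\<lambda>k. if C u (h k) then 1 else (0 :: complex))" for u
  have "x u \<bullet>c x v = (\<Sum>k\<in>{0..<N}. if C u (h k) \<and> C v (h k) then 1 else 0)" for u v
    unfolding x_def scalar_prod_def by (auto intro!: sum.cong)
  then have prod: "x u \<bullet>c x v = of_nat (card ({0..<N} \<inter> {k. C u (h k) \<and> C v (h k)}))" for u v
    by (simp add: sum.If_cases)
  have common: "(\<exists>k<N. C u (h k) \<and> C v (h k)) \<longleftrightarrow> G u v" if "u \<noteq> v" for u v
  proof
    assume "\<exists>k<N. C u (h k) \<and> C v (h k)"
    then obtain a b where "C u (a, b)" "C v (a, b)" by (metis surj_pair)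
    then have "G a b" "{a, b} = {u, v}" using that unfolding C_def by auto
    then show "G u v" using simple_graph_sym[OF G] by (auto simp: doubleton_eq_iff)
  next
    assume "G u v"
    then show "\<exists>k<N. C u (h k) \<and> C v (h k)"
      using fN[of "(u, v)"] hf[of "(u, v)"] unfolding C_def by (intro exI[of _ "f (u, v)"]) auto
  qed
  have "x u \<in> carrier_vec N \<and> x u \<noteq> 0\<^sub>v N" for u
  proof
    show "x u \<in> carrier_vec N" unfolding x_def by simp
    have "x u $ f (u, u) = 1" using fN hf unfolding x_def C_def by simp
    then show "x u \<noteq> 0\<^sub>v N" using fN[of "(u, u)"] by auto
  qed
  moreover have "x u \<bullet>c x v = 0 \<longleftrightarrow> \<not> G u v" if "u \<noteq> v" for u v
    using prod common[OF that] by (auto simp: card_eq_0_iff)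
  ultimately show ?thesis by blast
qed

lemma faithful_isometry_rep_rank_one_exists:
  fixes G :: "'v::finite \<Rightarrow> 'v \<Rightarrow> bool"
  assumes G: "simple_graph G"
  obtains m W where "faithful_isometry_rep G W m 1"
proof -
  obtain m and x :: "'v \<Rightarrow> complex vec" where x: "\<And>u. x u \<in> carrier_vec m" "\<And>u. x u \<noteq> 0\<^sub>v m"
    and orth: "\<And>u v. u \<noteq> v \<Longrightarrow> x u \<bullet>c x v = 0 \<longleftrightarrow> \<not> G u v"
    using faithful_vector_rep_exists[OF G] by blast
  define W where "W u = mat_of_cols m [normalize_vec (x u)]" for u
  have W: "W u \<in> carrier_mat m 1" for u unfolding W_def carrier_mat_def by simp
  have colW: "col (W u) 0 = normalize_vec (x u)" for u
    unfolding W_def using x by (subst col_mat_of_cols) auto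
  have W_adj: "mat_adjoint (W u) * W v = mat 1 1 (\<lambda>_. normalize_vec (x v) \<bullet>c normalize_vec (x u))"
    for u v
    using index_mat_adjoint_mult[OF W[of v] W[of u], of 0 0] colW W by (intro eq_matI) auto
  have "faithful_isometry_rep G W m 1" unfolding faithful_isometry_rep_def isometry_mat_def
  proof (intro conjI allI impI W)
    fix u :: 'v
    show "mat_adjoint (W u) * W u = 1\<^sub>m 1"
      unfolding W_adj cscalar_prod_normalize_vec_self[OF x] by auto
  next
    fix u v :: 'v assume uv: "u \<noteq> v"
    have "mat_adjoint (W u) * W v = 0\<^sub>m 1 1 \<longleftrightarrow> normalize_vec (x v) \<bullet>c normalize_vec (x u) = 0"
      unfolding W_adj by (auto simp: mat_eq_iff)
    also have "\<dots> \<longleftrightarrow> \<not> G u v"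
      using cscalar_prod_normalize_vec_eq_0_iff[OF x x] orth[of v u] uv simple_graph_sym[OF G] by auto
    finally show "mat_adjoint (W u) * W v = 0\<^sub>m 1 1 \<longleftrightarrow> \<not> G u v" .
  qed
  then show ?thesis using that by blast
qed

lemma faithful_isometry_rep_exists:
  fixes G :: "'v::finite \<Rightarrow> 'v \<Rightarrow> bool"
  assumes G: "simple_graph G" and r: "0 < r"
  obtains d W where "faithful_isometry_rep G W d r"
proof -
  obtain m w where w: "faithful_isometry_rep G w m 1"
    using faithful_isometry_rep_rank_one_exists[OF G] by blast
  obtain W' where "isometry_rep G W' ((r - 1) * m) ((r - 1) * 1)"
    using isometry_rep_multiple[OF faithful_isometry_rep_imp_isometry_rep[OF w]] by blast
  from faithful_isometry_rep_block_diag[OF this w] r show ?thesis using that by auto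
qed

section \<open>The fractional parameters\<close>

lemma cInf_eq_if_subset_approx:
  fixes A B :: "'a::{conditionally_complete_linorder, linordered_field} set"
  assumes sub: "B \<subseteq> A" and ne: "B \<noteq> {}" and bdd: "bdd_below A"
    and approx: "\<And>x e. x \<in> A \<Longrightarrow> 0 < e \<Longrightarrow> \<exists>y\<in>B. y \<le> x + e"
  shows "Inf A = Inf B"
proof (rule antisym)
  show "Inf A \<le> Inf B" using cInf_superset_mono[OF ne bdd sub] .
  have bddB: "bdd_below B" using bdd_below_mono[OF bdd sub] .
  have "Inf B \<le> x" if x: "x \<in> A" for x
  proof (rule field_le_epsilon)
    fix e :: 'a assume "0 < e"
    then obtain y where "y \<in> B" "y \<le> x + e" using approx[OF x] by blast
    then show "Inf B \<le> x + e" using cInf_lower[OF _ bddB] order_trans by blast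
  qed
  then show "Inf B \<le> Inf A" using sub ne by (intro cInf_greatest) auto
qed

lemma padded_ratio_le:
  fixes d m r :: nat and e :: real
  assumes r: "0 < r" and e: "0 < e"
  obtains k where "real (k * d + m) / real (k * r + 1) \<le> real d / real r + e"
proof -
  obtain k :: nat where k: "real m / (real r * e) < real k" using reals_Archimedean2 by blast
  have "0 \<le> real m / (real r * e)" using r e by simp
  then have kr: "0 < real k * real r" using k r by simp
  have "real m < real k * (real r * e)" using k r e by (simp add: pos_divide_less_eq)
  then have small: "real m / (real k * real r) < e" using kr by (simp add: pos_divide_less_eq ac_simps)
  have "real (k * d + m) / real (k * r + 1) \<le> real (k * d + m) / (real k * real r)"
    using kr by (intro divide_left_mono) auto
  also have "\<dots> = real d / real r + real m / (real k * real r)"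
    using kr by (simp add: field_simps zero_less_mult_iff)
  also have "\<dots> \<le> real d / real r + e" using small by simp
  finally show ?thesis by (rule that)
qed

lemma mr_plus_fold_le: "faithful_osr G d r S \<Longrightarrow> mr_plus_fold G r \<le> d"
  unfolding mr_plus_fold_def by (rule Least_le) blast

lemma faithful_osr_mr_plus_fold:
  fixes G :: "'v::finite \<Rightarrow> 'v \<Rightarrow> bool"
  assumes G: "simple_graph G" and r: "0 < r"
  obtains S where "faithful_osr G (mr_plus_fold G r) r S"
proof -
  obtain d W where "faithful_isometry_rep G W d r" using faithful_isometry_rep_exists[OF G r] .
  then have "\<exists>d S. faithful_osr G d r S" using faithful_isometry_rep_faithful_osr[OF G] by blast
  then have "\<exists>S. faithful_osr G (mr_plus_fold G r) r S"
    unfolding mr_plus_fold_def by (rule LeastI2_ex) auto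
  then show ?thesis using that by blast
qed

definition projective_ratios :: "('v \<Rightarrow> 'v \<Rightarrow> bool) \<Rightarrow> real set" where
  "projective_ratios H = {real d / real r | d r. 0 < r \<and> r \<le> d \<and> (\<exists>P. dr_representation H d r P)}"

definition mr_plus_ratios :: "('v \<Rightarrow> 'v \<Rightarrow> bool) \<Rightarrow> real set" where
  "mr_plus_ratios G = {real (mr_plus_fold G r) / real r | r. 0 < r}"

lemma projective_rank_eq_Inf: "projective_rank H = Inf (projective_ratios H)"
  unfolding projective_rank_def projective_ratios_def ..

lemma mr_plus_frac_eq_Inf: "mr_plus_frac G = Inf (mr_plus_ratios G)"
  unfolding mr_plus_frac_def mr_plus_ratios_def ..

lemma bdd_below_projective_ratios: "bdd_below (projective_ratios H)"
  unfolding projective_ratios_def by (rule bdd_belowI[of _ 0]) auto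

lemma mr_plus_ratios_ne: "mr_plus_ratios G \<noteq> {}"
  unfolding mr_plus_ratios_def by blast

lemma mr_plus_ratios_subset_projective_ratios:
  fixes G :: "'v::finite \<Rightarrow> 'v \<Rightarrow> bool"
  assumes G: "simple_graph G"
  shows "mr_plus_ratios G \<subseteq> projective_ratios (complement_graph G)"
proof
  fix x assume "x \<in> mr_plus_ratios G"
  then obtain r where x: "x = real (mr_plus_fold G r) / real r" and r: "0 < r"
    unfolding mr_plus_ratios_def by blast
  obtain S where "faithful_osr G (mr_plus_fold G r) r S" using faithful_osr_mr_plus_fold[OF G r] .
  then obtain W where rep: "faithful_isometry_rep G W (mr_plus_fold G r) r"
    using faithful_osr_faithful_isometry_rep[OF G] by blast
  then obtain u where "isometry_mat (W u) (mr_plus_fold G r) r"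
    unfolding faithful_isometry_rep_def by blast
  note P = isometry_mat_projection[OF this]
  have "r \<le> mr_plus_fold G r"
    using vec_space.rank_le_nc[OF P(1)] unfolding P(4) .
  then show "x \<in> projective_ratios (complement_graph G)"
    unfolding projective_ratios_def x using r faithful_isometry_rep_dr_representation[OF rep] by blast
qed

lemma mr_plus_ratios_approx_projective_ratios:
  fixes G :: "'v::finite \<Rightarrow> 'v \<Rightarrow> bool"
  assumes G: "simple_graph G" and x: "x \<in> projective_ratios (complement_graph G)" and e: "0 < e"
  shows "\<exists>y\<in>mr_plus_ratios G. y \<le> x + e"
proof -
  obtain d r P where x_eq: "x = real d / real r" and r: "0 < r"
    and dr: "dr_representation (complement_graph G) d r P"
    using x unfolding projective_ratios_def by blast
  obtain W where W: "isometry_rep G W d r" using dr_representation_isometry_rep[OF dr] .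
  obtain m w where w: "faithful_isometry_rep G w m 1"
    using faithful_isometry_rep_rank_one_exists[OF G] .
  obtain k where k: "real (k * d + m) / real (k * r + 1) \<le> x + e"
    using padded_ratio_le[OF r e] unfolding x_eq .
  obtain W' where "isometry_rep G W' (k * d) (k * r)" using isometry_rep_multiple[OF W] by blast
  from faithful_isometry_rep_block_diag[OF this w]
  have "mr_plus_fold G (k * r + 1) \<le> k * d + m"
    by (rule mr_plus_fold_le[OF faithful_isometry_rep_faithful_osr[OF G]])
  then have "real (mr_plus_fold G (k * r + 1)) \<le> real (k * d + m)" by (simp only: of_nat_le_iff)
  then have "real (mr_plus_fold G (k * r + 1)) / real (k * r + 1) \<le> real (k * d + m) / real (k * r + 1)"
    by (rule divide_right_mono) simp
  then have "real (mr_plus_fold G (k * r + 1)) / real (k * r + 1) \<le> x + e" using k by linarith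
  moreover have "real (mr_plus_fold G (k * r + 1)) / real (k * r + 1) \<in> mr_plus_ratios G"
    unfolding mr_plus_ratios_def by (intro CollectI exI[of _ "k * r + 1"]) simp
  ultimately show ?thesis by (intro bexI)
qed

theorem mainTheorem1:
  fixes G :: "'v::finite \<Rightarrow> 'v \<Rightarrow> bool"
  assumes "simple_graph G"
  shows "projective_rank (complement_graph G) = mr_plus_frac G"
  unfolding projective_rank_eq_Inf mr_plus_frac_eq_Inf
  using mr_plus_ratios_subset_projective_ratios[OF assms] mr_plus_ratios_ne
    bdd_below_projective_ratios mr_plus_ratios_approx_projective_ratios[OF assms]
  by (rule cInf_eq_if_subset_approx)

end
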